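(* Let $\mathbf{P}=(X,P)$ be a dually-CPT poset and let $M$ be a strong clique module of $\mathbf{P}$ such that the subposet induced by $M$ is CI. If an element $z\in M$ is represented by a trivial path in a CPT representation $\{W_x\}_{x\in X}$ of $\mathbf{P}$, then there exists a CPT representation $\{W'_x\}_{x\in X}$ of $\mathbf{P}$ in which $z$ is represented by a non-trivial path.
   Context: A poset is CPT if there is a tree $T$ and paths $W_x$ of $T$ with $x<y$ iff $W_x\subsetneq W_y$ (a CPT representation); CI if this can be done with $T$ a path. $\mathbf{P}$ is dually-CPT if both $\mathbf{P}$ and its dual are CPT. A module is a set $M\subseteq X$ such that each $y\notin M$ is comparable to all or to none of the elements of $M$; it is strong if for every module $M'$, $M\cap M'=\emptyset$, $M\subseteq M'$ or $M'\subseteq M$. A strong module $M$ is a clique module if the complement of the comparability graph induced on $M$ is disconnected. A trivial path consists of a single vertex. *)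

theory Defs
  imports Main
begin

definition finite_poset :: "'a set \<Rightarrow> ('a \<Rightarrow> 'a \<Rightarrow> bool) \<Rightarrow> bool" where
  "finite_poset X lt \<longleftrightarrow> finite X \<and> (\<forall>x\<in>X. \<not> lt x x) \<and>
     (\<forall>x\<in>X. \<forall>y\<in>X. \<forall>z\<in>X. lt x y \<longrightarrow> lt y z \<longrightarrow> lt x z)"

definition walk :: "'v set set \<Rightarrow> 'v list \<Rightarrow> bool" where
  "walk E vs \<longleftrightarrow> vs \<noteq> [] \<and> (\<forall>i. Suc i < length vs \<longrightarrow> {vs ! i, vs ! Suc i} \<in> E)"

definition simple_graph :: "'v set \<Rightarrow> 'v set set \<Rightarrow> bool" where
  "simple_graph V E \<longleftrightarrow> (\<forall>e\<in>E. \<exists>u v. u \<in> V \<and> v \<in> V \<and> u \<noteq> v \<and> e = {u, v})"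

definition connected_graph :: "'v set \<Rightarrow> 'v set set \<Rightarrow> bool" where
  "connected_graph V E \<longleftrightarrow> (\<forall>u\<in>V. \<forall>v\<in>V. \<exists>vs. walk E vs \<and> set vs \<subseteq> V \<and> hd vs = u \<and> last vs = v)"

definition tree :: "'v set \<Rightarrow> 'v set set \<Rightarrow> bool" where
  "tree V E \<longleftrightarrow> finite V \<and> V \<noteq> {} \<and> simple_graph V E \<and> connected_graph V E \<and>
     card E = card V - 1"

definition is_path :: "'v set \<Rightarrow> 'v set set \<Rightarrow> 'v set \<Rightarrow> bool" where
  "is_path V E S \<longleftrightarrow> (\<exists>vs. walk E vs \<and> distinct vs \<and> set vs \<subseteq> V \<and> S = set vs)"

definition trivial_path :: "'v set \<Rightarrow> bool" where
  "trivial_path S \<longleftrightarrow> (\<exists>v. S = {v})"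

definition cpt_rep :: "'a set \<Rightarrow> ('a \<Rightarrow> 'a \<Rightarrow> bool) \<Rightarrow> 'v set \<Rightarrow> 'v set set \<Rightarrow> ('a \<Rightarrow> 'v set) \<Rightarrow> bool" where
  "cpt_rep X lt V E W \<longleftrightarrow> tree V E \<and> (\<forall>x\<in>X. is_path V E (W x)) \<and>
     (\<forall>x\<in>X. \<forall>y\<in>X. lt x y \<longleftrightarrow> W x \<subset> W y)"

(* Trees are finite, so vertices may be taken to be natural numbers w.l.o.g. *)
definition CPT :: "'a set \<Rightarrow> ('a \<Rightarrow> 'a \<Rightarrow> bool) \<Rightarrow> bool" where
  "CPT X lt \<longleftrightarrow> (\<exists>(V::nat set) E W. cpt_rep X lt V E W)"

definition CI :: "'a set \<Rightarrow> ('a \<Rightarrow> 'a \<Rightarrow> bool) \<Rightarrow> bool" where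
  "CI X lt \<longleftrightarrow> (\<exists>(V::nat set) E W. cpt_rep X lt V E W \<and> is_path V E V)"

definition dually_CPT :: "'a set \<Rightarrow> ('a \<Rightarrow> 'a \<Rightarrow> bool) \<Rightarrow> bool" where
  "dually_CPT X lt \<longleftrightarrow> CPT X lt \<and> CPT X (\<lambda>x y. lt y x)"

definition comparable :: "('a \<Rightarrow> 'a \<Rightarrow> bool) \<Rightarrow> 'a \<Rightarrow> 'a \<Rightarrow> bool" where
  "comparable lt x y \<longleftrightarrow> lt x y \<or> lt y x"

definition module :: "'a set \<Rightarrow> ('a \<Rightarrow> 'a \<Rightarrow> bool) \<Rightarrow> 'a set \<Rightarrow> bool" where
  "module X lt M \<longleftrightarrow> M \<subseteq> X \<and>
     (\<forall>y\<in>X - M. (\<forall>m\<in>M. comparable lt y m) \<or> (\<forall>m\<in>M. \<not> comparable lt y m))"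

definition strong_module :: "'a set \<Rightarrow> ('a \<Rightarrow> 'a \<Rightarrow> bool) \<Rightarrow> 'a set \<Rightarrow> bool" where
  "strong_module X lt M \<longleftrightarrow> module X lt M \<and>
     (\<forall>M'. module X lt M' \<longrightarrow> M \<inter> M' = {} \<or> M \<subseteq> M' \<or> M' \<subseteq> M)"

(* The complement of the comparability graph on M is disconnected: M splits into two
   nonempty parts with every element of one part comparable to every element of the other. *)
definition clique_module :: "'a set \<Rightarrow> ('a \<Rightarrow> 'a \<Rightarrow> bool) \<Rightarrow> 'a set \<Rightarrow> bool" where
  "clique_module X lt M \<longleftrightarrow> strong_module X lt M \<and>
     (\<exists>A B. A \<noteq> {} \<and> B \<noteq> {} \<and> A \<union> B = M \<and> A \<inter> B = {} \<and>
        (\<forall>a\<in>A. \<forall>b\<in>B. comparable lt a b))"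

end

theory Submission
  imports Defs
begin

text \<open>Since \<open>W z\<close> is a single vertex \<open>v\<close>, the element \<open>z\<close> is minimal, and the clique module
  \<open>M\<close> contains some \<open>b > z\<close>; the path \<open>W b\<close> leaves \<open>v\<close> along an edge \<open>vw\<close>. An element
  outside \<open>M\<close> is either comparable to all of \<open>M\<close>, and then, \<open>M\<close> being strong, it lies above
  all of \<open>M\<close> and its path contains \<open>W b\<close>, hence the edge \<open>vw\<close>; or it is comparable to no
  element of \<open>M\<close>, and then its path does not contain both \<open>v\<close> and \<open>w\<close>, as it would lie above
  \<open>z\<close>. So we may subdivide \<open>vw\<close> by a long new path \<open>Q\<close>, extend the paths through \<open>vw\<close> by
  \<open>Q\<close>, and redraw \<open>M\<close> inside \<open>Q\<close> from an interval representation of the CI poset \<open>M\<close> in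
  which every interval has at least two points.\<close>

section \<open>Walks, paths and trees\<close>

lemma walk_Nil [simp]: "\<not> walk E []"
  by (simp add: walk_def)

lemma walk_single [simp]: "walk E [x]"
  by (simp add: walk_def)

lemma walk_Cons_Cons [simp]: "walk E (x # y # xs) \<longleftrightarrow> {x, y} \<in> E \<and> walk E (y # xs)"
  unfolding walk_def by (auto simp: less_Suc_eq_0_disj)

lemma walk_append:
  assumes "xs \<noteq> []" "ys \<noteq> []"
  shows "walk E (xs @ ys) \<longleftrightarrow> walk E xs \<and> walk E ys \<and> {last xs, hd ys} \<in> E"
  using assms
proof (induction xs rule: induct_list012)
  case (3 x y zs)
  then show ?case by simp
qed (auto simp: neq_Nil_conv)

lemma walk_infix:
  assumes "walk E (xs @ ys @ zs)" "ys \<noteq> []"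
  shows "walk E ys"
  unfolding walk_def
proof (intro conjI allI impI)
  fix i assume "Suc i < length ys"
  then show "{ys ! i, ys ! Suc i} \<in> E"
    using assms(1) unfolding walk_def
    by (auto dest!: spec[of _ "length xs + i"] simp: nth_append)
qed (fact assms(2))

lemma walk_glue: "walk E (xs @ [x]) \<Longrightarrow> walk E (x # ys) \<Longrightarrow> walk E (xs @ x # ys)"
  by (cases "xs = []") (auto simp: walk_append)

lemma walk_rev: "walk E xs \<Longrightarrow> walk E (rev xs)"
proof (induction xs rule: induct_list012)
  case (3 x y zs)
  then have "walk E ((rev zs @ [y]) @ [x])"
    by (subst walk_append) (auto simp: insert_commute)
  then show ?case by simp
qed simp_all

lemma walk_mono: "walk E xs \<Longrightarrow> E \<subseteq> E' \<Longrightarrow> walk E' xs"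
  unfolding walk_def by blast

lemma walk_edge: "walk E xs \<Longrightarrow> Suc i < length xs \<Longrightarrow> {xs ! i, xs ! Suc i} \<in> E"
  unfolding walk_def by blast

lemma walk_avoiding_edge: "walk E xs \<Longrightarrow> \<not> {v, w} \<subseteq> set xs \<Longrightarrow> walk (E - {{v, w}}) xs"
  unfolding walk_def by (metis DiffI Suc_lessD empty_subsetI insert_subset nth_mem singletonD)

lemma walk_map: "walk E xs \<Longrightarrow> walk ((`) f ` E) (map f xs)"
  unfolding walk_def by (auto intro!: image_eqI[where x = "{xs ! i, xs ! Suc i}" for i])

fun walk_edges :: "'v list \<Rightarrow> 'v set set" where
  "walk_edges (x # y # xs) = insert {x, y} (walk_edges (y # xs))"
| "walk_edges _ = {}"

lemma walk_walk_edges: "xs \<noteq> [] \<Longrightarrow> walk (walk_edges xs) xs"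
  by (induction xs rule: walk_edges.induct) (auto intro: walk_mono)

lemma walk_edges_subset: "e \<in> walk_edges xs \<Longrightarrow> e \<subseteq> set xs"
  by (induction xs rule: walk_edges.induct) auto

lemma walk_edges_nonempty: "{} \<notin> walk_edges xs"
  by (induction xs rule: walk_edges.induct) auto

lemma walk_edges_append:
  "xs \<noteq> [] \<Longrightarrow> ys \<noteq> [] \<Longrightarrow>
    walk_edges (xs @ ys) = walk_edges xs \<union> walk_edges ys \<union> {{last xs, hd ys}}"
  by (induction xs rule: walk_edges.induct) (auto simp: neq_Nil_conv)

lemma finite_walk_edges [simp]: "finite (walk_edges xs)"
  by (induction xs rule: walk_edges.induct) auto

lemma card_walk_edges: "distinct xs \<Longrightarrow> card (walk_edges xs) = length xs - 1"
proof (induction xs rule: walk_edges.induct)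
  case (1 x y xs)
  have "{x, y} \<notin> walk_edges (y # xs)"
    using "1.prems" walk_edges_subset by fastforce
  then show ?case using 1 by simp
qed auto

lemma simple_graph_walk_edges: "distinct xs \<Longrightarrow> set xs \<subseteq> V \<Longrightarrow> simple_graph V (walk_edges xs)"
  by (induction xs rule: walk_edges.induct) (auto simp: simple_graph_def)

lemma simple_graph_edgeD: "simple_graph V E \<Longrightarrow> {x, y} \<in> E \<Longrightarrow> x \<in> V \<and> y \<in> V \<and> x \<noteq> y"
  unfolding simple_graph_def by (fastforce simp: doubleton_eq_iff)

lemma simple_graph_edges_subset_Pow: "simple_graph V E \<Longrightarrow> E \<subseteq> Pow V"
  unfolding simple_graph_def by auto

lemma simple_graph_finite_edges: "simple_graph V E \<Longrightarrow> finite V \<Longrightarrow> finite E"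
  using simple_graph_edges_subset_Pow finite_subset by (metis finite_Pow_iff)

lemma simple_graph_mono: "simple_graph V E \<Longrightarrow> E' \<subseteq> E \<Longrightarrow> V \<subseteq> V' \<Longrightarrow> simple_graph V' E'"
  unfolding simple_graph_def by (metis subset_iff)

lemma simple_graph_Un: "simple_graph V E \<Longrightarrow> simple_graph V E' \<Longrightarrow> simple_graph V (E \<union> E')"
  unfolding simple_graph_def by auto

definition adjacent :: "'v set set \<Rightarrow> 'v \<Rightarrow> 'v \<Rightarrow> bool" where
  "adjacent E x y \<longleftrightarrow> {x, y} \<in> E"

lemma reachable_sym: "(adjacent E)\<^sup>*\<^sup>* x y \<Longrightarrow> (adjacent E)\<^sup>*\<^sup>* y x"
proof -
  have "symp (adjacent E)"
    by (simp add: symp_def adjacent_def insert_commute)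
  then show "(adjacent E)\<^sup>*\<^sup>* x y \<Longrightarrow> (adjacent E)\<^sup>*\<^sup>* y x"
    by (metis symp_rtranclp sympD)
qed

lemma walk_reachable: "walk E xs \<Longrightarrow> x \<in> set xs \<Longrightarrow> (adjacent E)\<^sup>*\<^sup>* (hd xs) x"
proof (induction xs rule: induct_list012)
  case (3 y y' ys)
  then show ?case
    by (auto simp: adjacent_def intro: converse_rtranclp_into_rtranclp)
qed auto

lemma reachable_walk:
  assumes "(adjacent E)\<^sup>*\<^sup>* a b" "a \<in> V" "simple_graph V E"
  shows "\<exists>xs. walk E xs \<and> set xs \<subseteq> V \<and> hd xs = a \<and> last xs = b"
  using assms(1)
proof (induction rule: rtranclp_induct)
  case base
  then show ?case using assms(2) by (intro exI[of _ "[a]"]) auto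
next
  case (step y y')
  then obtain xs where xs: "walk E xs" "set xs \<subseteq> V" "hd xs = a" "last xs = y"
    by blast
  have "{y, y'} \<in> E"
    using step.hyps(2) by (simp add: adjacent_def)
  moreover have "xs \<noteq> []"
    using xs(1) by auto
  ultimately show ?case
    using xs simple_graph_edgeD[OF assms(3)]
    by (intro exI[of _ "xs @ [y']"]) (simp add: walk_append)
qed

lemma connected_graph_iff_reachable:
  assumes "simple_graph V E"
  shows "connected_graph V E \<longleftrightarrow> (\<forall>u\<in>V. \<forall>v\<in>V. (adjacent E)\<^sup>*\<^sup>* u v)"
  unfolding connected_graph_def
  using walk_reachable[where x = "last xs" for xs] reachable_walk[OF _ _ assms]
  by (metis last_in_set walk_Nil)

lemma reachable_if_edges_reachable:
  assumes "\<And>x y. adjacent E x y \<Longrightarrow> (adjacent E')\<^sup>*\<^sup>* x y"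
  shows "(adjacent E)\<^sup>*\<^sup>* x y \<Longrightarrow> (adjacent E')\<^sup>*\<^sup>* x y"
  using rtranclp_mono[of "adjacent E" "(adjacent E')\<^sup>*\<^sup>*"] assms by auto

text \<open>Every vertex other than the root has a neighbour strictly closer to the root; these
  parent edges are pairwise distinct.\<close>
lemma connected_graph_card_le:
  assumes fin: "finite V" and simple: "simple_graph V E" and conn: "connected_graph V E"
    and root: "r \<in> V"
  shows "card V \<le> Suc (card E)"
proof -
  define d where "d x = (LEAST n. \<exists>xs. walk E xs \<and> hd xs = x \<and> last xs = r \<and> length xs = n)"
    for x
  have closer: "\<exists>p. {x, p} \<in> E \<and> d p < d x" if x: "x \<in> V - {r}" for x
  proof -
    have "\<exists>n xs. walk E xs \<and> hd xs = x \<and> last xs = r \<and> length xs = n"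
      using conn x root unfolding connected_graph_def by blast
    then have "\<exists>xs. walk E xs \<and> hd xs = x \<and> last xs = r \<and> length xs = d x"
      unfolding d_def by (rule LeastI_ex)
    then obtain xs where xs: "walk E xs" "hd xs = x" "last xs = r" "length xs = d x"
      by blast
    then obtain p ys where "xs = x # p # ys"
      using x by (metis Diff_iff insertCI last.simps list.exhaust_sel walk_Nil)
    with xs have "{x, p} \<in> E" and "walk E (p # ys)" "last (p # ys) = r"
      by auto
    then have "d p \<le> length (p # ys)"
      unfolding d_def by (metis (mono_tags, lifting) Least_le list.sel(1))
    with \<open>xs = x # p # ys\<close> xs(4) show ?thesis
      using \<open>{x, p} \<in> E\<close> by auto
  qed
  obtain parent where parent: "\<And>x. x \<in> V - {r} \<Longrightarrow> {x, parent x} \<in> E \<and> d (parent x) < d x"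
    using closer by metis
  have "inj_on (\<lambda>x. {x, parent x}) (V - {r})"
  proof (rule inj_onI)
    fix x y assume xy: "x \<in> V - {r}" "y \<in> V - {r}" "{x, parent x} = {y, parent y}"
    show "x = y"
    proof (rule ccontr)
      assume "x \<noteq> y"
      then have "x = parent y" "y = parent x"
        using xy(3) by (auto simp: doubleton_eq_iff)
      then show False
        using parent[OF xy(1)] parent[OF xy(2)] by simp
    qed
  qed
  moreover have "(\<lambda>x. {x, parent x}) ` (V - {r}) \<subseteq> E"
    using parent by auto
  ultimately have "card (V - {r}) \<le> card E"
    using card_inj_on_le simple_graph_finite_edges[OF simple fin] by blast
  then show ?thesis
    using root fin by (simp add: card_Diff_singleton)
qed

lemma tree_remove_edge_unreachable:
  assumes tree: "tree V E" and edge: "{v, w} \<in> E"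
  shows "\<not> (adjacent (E - {{v, w}}))\<^sup>*\<^sup>* v w"
proof
  assume vw: "(adjacent (E - {{v, w}}))\<^sup>*\<^sup>* v w"
  have fin: "finite V" and simple: "simple_graph V E" and conn: "connected_graph V E"
    and card: "card E = card V - 1"
    using tree unfolding tree_def by auto
  have simple': "simple_graph V (E - {{v, w}})"
    using simple_graph_mono[OF simple] by blast
  have edge_reachable: "(adjacent (E - {{v, w}}))\<^sup>*\<^sup>* x y" if xy: "adjacent E x y" for x y
  proof (cases "{x, y} = {v, w}")
    case True
    then have "x = v \<and> y = w \<or> x = w \<and> y = v"
      by (auto simp: doubleton_eq_iff)
    then show ?thesis
      using vw reachable_sym[OF vw] by auto
  next
    case False
    then have "adjacent (E - {{v, w}}) x y"
      using xy by (simp add: adjacent_def)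
    then show ?thesis
      by blast
  qed
  have "(adjacent (E - {{v, w}}))\<^sup>*\<^sup>* x y" if "x \<in> V" "y \<in> V" for x y
    using that conn connected_graph_iff_reachable[OF simple]
      reachable_if_edges_reachable[OF edge_reachable] by blast
  then have "connected_graph V (E - {{v, w}})"
    using connected_graph_iff_reachable[OF simple'] by blast
  moreover have "v \<in> V" "w \<in> V" "v \<noteq> w"
    using simple_graph_edgeD[OF simple edge] by auto
  moreover have "card (E - {{v, w}}) = card E - 1"
    using edge simple_graph_finite_edges[OF simple fin] by simp
  moreover have "card V \<ge> 2"
    using \<open>v \<in> V\<close> \<open>w \<in> V\<close> \<open>v \<noteq> w\<close> fin card_mono[of V "{v, w}"] by auto
  ultimately show False
    using connected_graph_card_le[OF fin simple'] card by fastforce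
qed

lemma tree_edge_consecutive:
  assumes tree: "tree V E" and edge: "{v, w} \<in> E" and xs: "walk E xs" "distinct xs"
    and ij: "i < j" "j < length xs" "xs ! i = v" "xs ! j = w"
  shows "j = Suc i"
proof (rule ccontr)
  assume not_next: "j \<noteq> Suc i"
  have "(adjacent (E - {{v, w}}))\<^sup>*\<^sup>* v (xs ! k)" if "i \<le> k" "k \<le> j" for k
    using that
  proof (induction k rule: dec_induct)
    case (step k)
    have "Suc k < length xs"
      using step ij by simp
    then have "{xs ! k, xs ! Suc k} \<noteq> {v, w}"
      using xs(2) ij not_next step.hyps by (auto simp: doubleton_eq_iff nth_eq_iff_index_eq)
    then have "adjacent (E - {{v, w}}) (xs ! k) (xs ! Suc k)"
      using walk_edge[OF xs(1) \<open>Suc k < length xs\<close>] by (simp add: adjacent_def)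
    moreover have "(adjacent (E - {{v, w}}))\<^sup>*\<^sup>* v (xs ! k)"
      using step by simp
    ultimately show ?case
      by (simp add: rtranclp.rtrancl_into_rtrancl)
  qed (simp add: ij)
  then show False
    using tree_remove_edge_unreachable[OF tree edge] ij by auto
qed

lemma take_nth_nth_drop:
  "Suc i < length xs \<Longrightarrow> xs = take i xs @ [xs ! i, xs ! Suc i] @ drop (Suc (Suc i)) xs"
  by (metis Cons_nth_drop_Suc Suc_lessD append_Cons append_Nil append_take_drop_id)

lemma tree_edge_in_path:
  assumes tree: "tree V E" and edge: "{v, w} \<in> E" and xs: "walk E xs" "distinct xs"
    and vw: "v \<in> set xs" "w \<in> set xs"
  obtains ys zs where "xs = ys @ [v, w] @ zs \<or> rev xs = ys @ [v, w] @ zs"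
proof -
  have decomp: "\<exists>ys zs. xs = ys @ [a, b] @ zs"
    if "{a, b} = {v, w}" "i < j" "j < length xs" "xs ! i = a" "xs ! j = b" for a b i j
  proof -
    have "{a, b} \<in> E"
      using that(1) edge by simp
    then have "j = Suc i"
      using tree_edge_consecutive[OF tree _ xs] that(2-) by blast
    then show ?thesis
      using take_nth_nth_drop[of i xs] that by auto
  qed
  obtain i j where ij: "i < length xs" "j < length xs" "xs ! i = v" "xs ! j = w"
    using vw by (auto simp: in_set_conv_nth)
  have "simple_graph V E"
    using tree by (simp add: tree_def)
  then have "v \<noteq> w"
    using simple_graph_edgeD edge by metis
  then have "i \<noteq> j"
    using ij by auto
  then consider "i < j" | "j < i"
    by linarith
  then show ?thesis
  proof cases
    case 1
    then show ?thesis
      using decomp[of v w i j] ij that by blast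
  next
    case 2
    then obtain ys zs where "xs = ys @ [w, v] @ zs"
      using decomp[of w v j i] ij by (auto simp: insert_commute)
    then have "rev xs = rev zs @ [v, w] @ rev ys"
      by simp
    then show ?thesis
      using that by blast
  qed
qed

lemma is_path_subset: "is_path V E S \<Longrightarrow> S \<subseteq> V"
  unfolding is_path_def by blast

lemma is_path_nonempty: "is_path V E S \<Longrightarrow> S \<noteq> {}"
  unfolding is_path_def by auto

lemma is_path_neighbour:
  assumes "is_path V E S" "v \<in> S" "S \<noteq> {v}"
  obtains w where "w \<in> S" "w \<noteq> v" "{v, w} \<in> E"
proof -
  obtain xs where xs: "walk E xs" "distinct xs" "S = set xs"
    using assms(1) unfolding is_path_def by blast
  obtain i where i: "i < length xs" "xs ! i = v"
    using assms(2) xs(3) by (auto simp: in_set_conv_nth)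
  have "length xs \<noteq> 1"
    using assms(2,3) xs(3) by (auto simp: length_Suc_conv)
  then consider "Suc i < length xs" | "i = Suc (i - 1)"
    using i(1) by linarith
  then show ?thesis
  proof cases
    case 1
    moreover have "xs ! Suc i \<noteq> v"
      using nth_eq_iff_index_eq[OF xs(2) 1 i(1)] i(2) by simp
    ultimately show ?thesis
      using that[of "xs ! Suc i"] walk_edge[OF xs(1) 1] i xs(3) by simp
  next
    case 2
    then have "{xs ! (i - 1), v} \<in> E"
      using walk_edge[OF xs(1), of "i - 1"] i by simp
    moreover have "i - 1 < length xs" "i - 1 \<noteq> i"
      using 2 i(1) by linarith+
    then have "xs ! (i - 1) \<noteq> v"
      using nth_eq_iff_index_eq[OF xs(2) _ i(1), of "i - 1"] i(2) by simp
    ultimately show ?thesis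
      using that[of "xs ! (i - 1)"] i xs(3) by (simp add: insert_commute)
  qed
qed

lemma inj_on_image_psubset_iff:
  assumes "inj_on f C" "A \<subseteq> C" "B \<subseteq> C"
  shows "f ` A \<subset> f ` B \<longleftrightarrow> A \<subset> B"
proof -
  have "f ` A \<subseteq> f ` B \<longleftrightarrow> A \<subseteq> B"
    using assms inj_on_image_mem_iff[OF assms(1)] by blast
  then show ?thesis
    using inj_on_image_eq_iff[OF assms] by (auto simp: psubset_eq)
qed

lemma tree_image:
  assumes tree: "tree V E" and inj: "inj_on f V"
  shows "tree (f ` V) ((`) f ` E)"
proof -
  have simple: "simple_graph V E" and conn: "connected_graph V E"
    using tree unfolding tree_def by auto
  have "simple_graph (f ` V) ((`) f ` E)"
    using simple inj unfolding simple_graph_def by (fastforce dest: inj_on_contraD)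
  moreover have "connected_graph (f ` V) ((`) f ` E)"
    unfolding connected_graph_def
  proof (intro ballI)
    fix u v assume "u \<in> f ` V" "v \<in> f ` V"
    then obtain a b where "a \<in> V" "b \<in> V" "u = f a" "v = f b"
      by blast
    then obtain xs where xs: "walk E xs" "set xs \<subseteq> V" "f (hd xs) = u" "f (last xs) = v"
      using conn unfolding connected_graph_def by metis
    moreover from xs(1) have "xs \<noteq> []"
      by auto
    ultimately show "\<exists>ys. walk ((`) f ` E) ys \<and> set ys \<subseteq> f ` V \<and> hd ys = u \<and> last ys = v"
      by (intro exI[of _ "map f xs"]) (auto simp: walk_map hd_map last_map)
  qed
  moreover have "card ((`) f ` E) = card E"
    using inj_on_subset[OF inj_on_image_Pow[OF inj] simple_graph_edges_subset_Pow[OF simple]]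
    by (rule card_image)
  ultimately show ?thesis
    using tree inj by (simp add: tree_def card_image)
qed

lemma is_path_image:
  assumes "is_path V E S" "inj_on f V"
  shows "is_path (f ` V) ((`) f ` E) (f ` S)"
proof -
  obtain xs where "walk E xs" "distinct xs" "set xs \<subseteq> V" "S = set xs"
    using assms(1) unfolding is_path_def by blast
  then show ?thesis
    unfolding is_path_def using assms(2)
    by (intro exI[of _ "map f xs"]) (auto simp: walk_map distinct_map intro: inj_on_subset)
qed

lemma cpt_rep_image:
  assumes "cpt_rep X lt V E W" and inj: "inj_on f V"
  shows "cpt_rep X lt (f ` V) ((`) f ` E) (\<lambda>x. f ` W x)"
  using assms tree_image is_path_image inj_on_image_psubset_iff[OF inj] is_path_subset
  unfolding cpt_rep_def by metis

section \<open>Subdividing an edge\<close>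

definition subdivide_edge :: "'v set set \<Rightarrow> 'v \<Rightarrow> 'v \<Rightarrow> 'v list \<Rightarrow> 'v set set" where
  "subdivide_edge E v w qs = (E - {{v, w}}) \<union> walk_edges (v # qs @ [w])"

locale edge_subdivision =
  fixes V :: "'v set" and E :: "'v set set" and v w :: 'v and qs :: "'v list"
  assumes tree: "tree V E" and edge: "{v, w} \<in> E"
    and qs_nonempty: "qs \<noteq> []" and qs_distinct: "distinct qs" and qs_fresh: "set qs \<inter> V = {}"
begin

lemma host_finite: "finite V" and host_simple: "simple_graph V E"
  and host_connected: "connected_graph V E" and host_card_edges: "card E = card V - 1"
  using tree unfolding tree_def by auto

lemma endpoints: "v \<in> V" "w \<in> V" "v \<noteq> w"
  using simple_graph_edgeD[OF host_simple edge] by auto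

lemma walk_chain: "walk (subdivide_edge E v w qs) (v # qs @ [w])"
  unfolding subdivide_edge_def by (rule walk_mono[OF walk_walk_edges]) auto

lemma distinct_chain: "distinct (v # qs @ [w])"
  using qs_distinct qs_fresh endpoints by auto

lemma walk_subdivide_edge:
  assumes "walk E xs" "\<not> {v, w} \<subseteq> set xs"
  shows "walk (subdivide_edge E v w qs) xs"
proof (rule walk_mono)
  show "walk (E - {{v, w}}) xs"
    using assms by (rule walk_avoiding_edge)
  show "E - {{v, w}} \<subseteq> subdivide_edge E v w qs"
    unfolding subdivide_edge_def by blast
qed

lemma chain_edges_meet_qs:
  assumes "e \<in> walk_edges (v # qs @ [w])"
  shows "e \<inter> set qs \<noteq> {}"
proof -
  have "walk_edges (v # qs @ [w]) = walk_edges qs \<union> {{v, hd qs}, {last qs, w}}"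
    using walk_edges_append[of "[v]" "qs @ [w]"] walk_edges_append[of qs "[w]"] qs_nonempty
    by auto
  moreover have "e' \<inter> set qs \<noteq> {}" if "e' \<in> walk_edges qs" for e'
    using that walk_edges_subset walk_edges_nonempty by (metis Int_absorb2)
  moreover have "hd qs \<in> set qs" "last qs \<in> set qs"
    using qs_nonempty by auto
  ultimately show ?thesis
    using assms by blast
qed

lemma simple_subdivide_edge: "simple_graph (V \<union> set qs) (subdivide_edge E v w qs)"
proof -
  have "simple_graph (V \<union> set qs) (walk_edges (v # qs @ [w]))"
    using distinct_chain endpoints by (intro simple_graph_walk_edges) auto
  moreover have "simple_graph (V \<union> set qs) (E - {{v, w}})"
    using simple_graph_mono[OF host_simple, of "E - {{v, w}}"] by blast
  ultimately show ?thesis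
    unfolding subdivide_edge_def by (rule simple_graph_Un[rotated])
qed

lemma card_subdivide_edge: "card (subdivide_edge E v w qs) = card (V \<union> set qs) - 1"
proof -
  have "(E - {{v, w}}) \<inter> walk_edges (v # qs @ [w]) = {}"
    using chain_edges_meet_qs simple_graph_edges_subset_Pow[OF host_simple] qs_fresh by blast
  then have "card (subdivide_edge E v w qs) =
      card (E - {{v, w}}) + card (walk_edges (v # qs @ [w]))"
    unfolding subdivide_edge_def
    using simple_graph_finite_edges[OF host_simple host_finite] by (simp add: card_Un_disjoint)
  also have "\<dots> = card V - 2 + (length qs + 1)"
    using card_walk_edges[OF distinct_chain] edge host_card_edges
      simple_graph_finite_edges[OF host_simple host_finite] by simp
  also have "\<dots> = card (V \<union> set qs) - 1"
  proof -
    have "card V \<ge> 2"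
      using endpoints host_finite card_mono[of V "{v, w}"] by auto
    moreover have "card (V \<union> set qs) = card V + length qs"
      using host_finite qs_fresh qs_distinct
      by (simp add: card_Un_disjoint distinct_card Int_commute)
    ultimately show ?thesis
      by simp
  qed
  finally show ?thesis .
qed

lemma connected_subdivide_edge: "connected_graph (V \<union> set qs) (subdivide_edge E v w qs)"
proof -
  let ?reach = "(adjacent (subdivide_edge E v w qs))\<^sup>*\<^sup>*"
  have chain_reach: "?reach v x" if "x \<in> set (v # qs @ [w])" for x
    using walk_reachable[OF walk_chain that] by simp
  have edge_reach: "?reach x y" if "adjacent E x y" for x y
  proof (cases "{x, y} = {v, w}")
    case True
    then have "x = v \<and> y = w \<or> x = w \<and> y = v"
      by (auto simp: doubleton_eq_iff)
    then show ?thesis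
      using chain_reach[of w] reachable_sym[of _ v w] by auto
  next
    case False
    then have "adjacent (subdivide_edge E v w qs) x y"
      using that by (simp add: adjacent_def subdivide_edge_def)
    then show ?thesis
      by blast
  qed
  have "?reach v x" if "x \<in> V" for x
    using that endpoints host_connected connected_graph_iff_reachable[OF host_simple]
      reachable_if_edges_reachable[OF edge_reach] by blast
  then have "?reach v x" if "x \<in> V \<union> set qs" for x
    using that chain_reach by auto
  then show ?thesis
    unfolding connected_graph_iff_reachable[OF simple_subdivide_edge]
    by (meson reachable_sym rtranclp_trans)
qed

lemma tree_subdivide_edge: "tree (V \<union> set qs) (subdivide_edge E v w qs)"
  unfolding tree_def
  using host_finite simple_subdivide_edge connected_subdivide_edge card_subdivide_edge endpoints
  by auto

lemma is_path_subdivide_edge_avoiding: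
  "is_path V E S \<Longrightarrow> \<not> {v, w} \<subseteq> S \<Longrightarrow> is_path (V \<union> set qs) (subdivide_edge E v w qs) S"
  unfolding is_path_def using walk_subdivide_edge by blast

lemma is_path_subdivide_edge_through:
  assumes "is_path V E S" "{v, w} \<subseteq> S"
  shows "is_path (V \<union> set qs) (subdivide_edge E v w qs) (S \<union> set qs)"
proof -
  obtain xs where xs: "walk E xs" "distinct xs" "set xs \<subseteq> V" "S = set xs"
    using assms(1) unfolding is_path_def by blast
  obtain ys zs where "xs = ys @ [v, w] @ zs \<or> rev xs = ys @ [v, w] @ zs"
    using tree_edge_in_path[OF tree edge xs(1,2)] assms(2) xs(4) by auto
  moreover have "walk E (rev xs)" "distinct (rev xs)" "set (rev xs) = set xs"
    using xs walk_rev by auto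
  ultimately obtain xs' where xs': "xs' = ys @ [v, w] @ zs" "walk E xs'" "distinct xs'"
    "set xs' \<subseteq> V" "S = set xs'"
    using xs by metis
  have "walk E (ys @ [v])" "walk E (w # zs)"
    using walk_infix[of E "[]" "ys @ [v]" "w # zs"] walk_infix[of E "ys @ [v]" "w # zs" "[]"] xs'
    by auto
  moreover have "w \<notin> set (ys @ [v])" "v \<notin> set (w # zs)"
    using xs'(1,3) by auto
  ultimately have "walk (subdivide_edge E v w qs) (ys @ [v])"
    "walk (subdivide_edge E v w qs) (w # zs)"
    using walk_subdivide_edge by blast+
  then have "walk (subdivide_edge E v w qs) (ys @ v # qs @ w # zs)"
    using walk_chain walk_glue[of _ ys v "qs @ [w]"] walk_glue[of _ "ys @ v # qs" w zs] by simp
  moreover have "distinct (ys @ v # qs @ w # zs)"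
    using xs' qs_distinct qs_fresh by auto
  moreover have "set (ys @ v # qs @ w # zs) = S \<union> set qs"
    using xs' by auto
  moreover have "S \<subseteq> V"
    using xs' by blast
  ultimately show ?thesis
    unfolding is_path_def by (intro exI[of _ "ys @ v # qs @ w # zs"]) auto
qed

lemma is_path_subdivide_edge_inner:
  assumes "qs = as @ ps @ bs" "ps \<noteq> []"
  shows "is_path (V \<union> set qs) (subdivide_edge E v w qs) (set ps)"
proof -
  have "walk (subdivide_edge E v w qs) ((v # as) @ ps @ (bs @ [w]))"
    using walk_chain assms(1) by simp
  then have "walk (subdivide_edge E v w qs) ps"
    using walk_infix assms(2) by blast
  moreover have "distinct ps"
    using qs_distinct assms(1) by simp
  ultimately show ?thesis
    unfolding is_path_def using assms(1) by (intro exI[of _ ps]) auto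
qed

end

section \<open>Interval representations of CI posets\<close>

lemma image_atMost_interval:
  fixes g :: "nat \<Rightarrow> nat"
  assumes "\<And>k. k < m \<Longrightarrow> g (Suc k) \<le> Suc (g k) \<and> g k \<le> Suc (g (Suc k))"
  shows "\<exists>l r. g ` {..m} = {l..r}"
  using assms
proof (induction m)
  case 0
  then show ?case by (intro exI[of _ "g 0"]) auto
next
  case (Suc m)
  then obtain l r where lr: "g ` {..m} = {l..r}"
    by auto
  then have "g m \<in> {l..r}"
    by auto
  then have "insert (g (Suc m)) {l..r} = {min l (g (Suc m))..max r (g (Suc m))}"
    using Suc.prems[of m] by auto
  then show ?case
    using lr by (auto simp: atMost_Suc)
qed

lemma walk_positions_interval:
  assumes tree: "tree V E" and hs: "walk E hs" "distinct hs"
    and pos: "\<And>a. a \<in> set hs \<Longrightarrow> pos a < length hs \<and> hs ! pos a = a"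
    and ws: "walk E ws" "set ws \<subseteq> set hs"
  shows "\<exists>l r. pos ` set ws = {l..r}"
proof -
  have "ws \<noteq> []"
    using ws(1) by auto
  then have "{..<length ws} = {..length ws - 1}"
    by (cases ws) (auto simp: lessThan_Suc_atMost)
  moreover have "set ws = (!) ws ` {..<length ws}"
    by (auto simp: in_set_conv_nth)
  ultimately have "pos ` set ws = (\<lambda>k. pos (ws ! k)) ` {..length ws - 1}"
    by (simp add: image_image)
  moreover have "pos (ws ! Suc k) = Suc (pos (ws ! k)) \<or> pos (ws ! k) = Suc (pos (ws ! Suc k))"
    if k: "k < length ws - 1" for k
  proof -
    have "ws ! k \<in> set hs" "ws ! Suc k \<in> set hs"
      using k ws(2) by (auto intro: nth_mem)
    then obtain i j where ij: "i = pos (ws ! k)" "j = pos (ws ! Suc k)"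
      "i < length hs" "j < length hs" "hs ! i = ws ! k" "hs ! j = ws ! Suc k"
      using pos by blast
    have edge: "{ws ! k, ws ! Suc k} \<in> E" "{ws ! Suc k, ws ! k} \<in> E"
      using walk_edge[OF ws(1)] k by (simp_all add: insert_commute)
    have "simple_graph V E"
      using tree by (simp add: tree_def)
    then have "ws ! k \<noteq> ws ! Suc k"
      using simple_graph_edgeD edge(1) by metis
    then consider "i < j" | "j < i"
      using ij by (metis linorder_neqE_nat)
    then show ?thesis
    proof cases
      case 1
      then show ?thesis
        using tree_edge_consecutive[OF tree edge(1) hs] ij by simp
    next
      case 2
      then show ?thesis
        using tree_edge_consecutive[OF tree edge(2) hs] ij by simp
    qed
  qed
  ultimately show ?thesis
    using image_atMost_interval[of "length ws - 1" "\<lambda>k. pos (ws ! k)"] by force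
qed

lemma obtain_list_positions:
  obtains pos where "\<And>a. a \<in> set xs \<Longrightarrow> pos a < length xs \<and> xs ! pos a = a"
proof -
  have "\<exists>i. i < length xs \<and> xs ! i = a" if "a \<in> set xs" for a
    using that by (simp add: in_set_conv_nth)
  then show ?thesis
    using that[of "\<lambda>a. SOME i. i < length xs \<and> xs ! i = a"]
    by (metis (mono_tags, lifting) someI_ex)
qed

lemma CI_interval_rep:
  assumes "CI M lt"
  obtains l r :: "'a \<Rightarrow> nat" and n :: nat
  where "\<And>x. x \<in> M \<Longrightarrow> l x \<le> r x \<and> r x < n"
    and "\<And>x y. x \<in> M \<Longrightarrow> y \<in> M \<Longrightarrow> lt x y \<longleftrightarrow> {l x..r x} \<subset> {l y..r y}"
proof -
  obtain VM :: "nat set" and EM WM where rep: "cpt_rep M lt VM EM WM" and host: "is_path VM EM VM"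
    using assms unfolding CI_def by blast
  obtain hs where hs: "walk EM hs" "distinct hs" "VM = set hs"
    using host unfolding is_path_def by blast
  have tree: "tree VM EM" and paths: "\<And>x. x \<in> M \<Longrightarrow> is_path VM EM (WM x)"
    and order: "\<And>x y. x \<in> M \<Longrightarrow> y \<in> M \<Longrightarrow> lt x y \<longleftrightarrow> WM x \<subset> WM y"
    using rep unfolding cpt_rep_def by auto
  obtain pos where pos: "\<And>a. a \<in> set hs \<Longrightarrow> pos a < length hs \<and> hs ! pos a = a"
    using obtain_list_positions[of hs] by blast
  have inj_pos: "inj_on pos (set hs)"
    by (rule inj_onI) (metis pos)
  have WM_hs: "WM x \<subseteq> set hs" if "x \<in> M" for x
    using is_path_subset[OF paths[OF that]] hs(3) by simp
  have "\<exists>l r. pos ` WM x = {l..r}" if x: "x \<in> M" for x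
  proof -
    obtain ws where "walk EM ws" "WM x = set ws"
      using paths[OF x] unfolding is_path_def by blast
    then show ?thesis
      using walk_positions_interval[OF tree[unfolded hs(3)] hs(1,2) pos] WM_hs[OF x] by simp
  qed
  then obtain l r where lr: "\<And>x. x \<in> M \<Longrightarrow> pos ` WM x = {l x..r x}"
    by metis
  show ?thesis
  proof
    fix x assume x: "x \<in> M"
    have "{l x..r x} \<noteq> {}"
      using lr[OF x] is_path_nonempty[OF paths[OF x]] by auto
    moreover have "r x \<in> pos ` WM x"
      using lr[OF x] calculation by auto
    ultimately show "l x \<le> r x \<and> r x < length hs"
      using pos WM_hs[OF x] by auto
  next
    fix x y assume xy: "x \<in> M" "y \<in> M"
    have "lt x y \<longleftrightarrow> WM x \<subset> WM y"
      using order[OF xy] .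
    also have "\<dots> \<longleftrightarrow> pos ` WM x \<subset> pos ` WM y"
      using inj_on_image_psubset_iff[OF inj_pos WM_hs[OF xy(1)] WM_hs[OF xy(2)]] by simp
    finally show "lt x y \<longleftrightarrow> {l x..r x} \<subset> {l y..r y}"
      using lr xy by simp
  qed
qed

lemma atLeastAtMost_double_psubset_iff:
  fixes a b c d :: nat
  assumes "a \<le> b" "c \<le> d"
  shows "{2 * a..2 * b + 1} \<subset> {2 * c..2 * d + 1} \<longleftrightarrow> {a..b} \<subset> {c..d}"
proof -
  have "{2 * a..2 * b + 1} \<subseteq> {2 * c..2 * d + 1} \<longleftrightarrow> {a..b} \<subseteq> {c..d}"
    "{2 * c..2 * d + 1} \<subseteq> {2 * a..2 * b + 1} \<longleftrightarrow> {c..d} \<subseteq> {a..b}"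
    using assms by auto
  then show ?thesis
    by (simp add: less_le_not_le)
qed

lemma CI_nondegenerate_interval_rep:
  assumes "CI M lt"
  obtains l r :: "'a \<Rightarrow> nat" and n :: nat
  where "\<And>x. x \<in> M \<Longrightarrow> l x < r x \<and> r x < n"
    and "\<And>x y. x \<in> M \<Longrightarrow> y \<in> M \<Longrightarrow> lt x y \<longleftrightarrow> {l x..r x} \<subset> {l y..r y}"
proof -
  obtain l r :: "'a \<Rightarrow> nat" and n :: nat
    where lr: "\<And>x. x \<in> M \<Longrightarrow> l x \<le> r x \<and> r x < n"
      and order: "\<And>x y. x \<in> M \<Longrightarrow> y \<in> M \<Longrightarrow> lt x y \<longleftrightarrow> {l x..r x} \<subset> {l y..r y}"
    using CI_interval_rep[OF assms] by blast
  show ?thesis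
  proof (rule that[of "\<lambda>x. 2 * l x" "\<lambda>x. 2 * r x + 1" "2 * n"])
    show "2 * l x < 2 * r x + 1 \<and> 2 * r x + 1 < 2 * n" if "x \<in> M" for x
      using lr[OF that] by simp
    show "lt x y \<longleftrightarrow> {2 * l x..2 * r x + 1} \<subset> {2 * l y..2 * r y + 1}" if "x \<in> M" "y \<in> M" for x y
      using order[OF that] atLeastAtMost_double_psubset_iff lr[OF that(1)] lr[OF that(2)]
      by simp
  qed
qed

section \<open>Strong modules\<close>

lemma finite_poset_transp_on: "finite_poset X lt \<Longrightarrow> transp_on X lt"
  unfolding finite_poset_def transp_on_def by blast

definition between_set :: "'a set \<Rightarrow> ('a \<Rightarrow> 'a \<Rightarrow> bool) \<Rightarrow> 'a set \<Rightarrow> 'a \<Rightarrow> 'a set" where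
  "between_set X lt M u = {m \<in> M. lt m u} \<union>
     {x \<in> X - M. (\<forall>m\<in>M. lt m u \<longrightarrow> lt m x) \<and> (\<forall>m\<in>M. lt u m \<longrightarrow> lt x m)}"

lemma between_set_below:
  assumes "transp_on X lt" "M \<subseteq> X" "u \<in> X"
    and "s \<in> between_set X lt M u" "c \<in> M" "lt u c"
  shows "lt s c"
  using assms transp_onD[OF assms(1), of s u c] unfolding between_set_def by blast

lemma between_set_comparable:
  assumes trans: "transp_on X lt" and MX: "M \<subseteq> X"
    and t: "t \<in> X - M - between_set X lt M u" "\<forall>m\<in>M. comparable lt t m"
    and below: "\<forall>c\<in>M. lt u c \<longrightarrow> lt t c"
  shows "\<forall>s\<in>between_set X lt M u. comparable lt t s"
proof (cases "\<exists>d\<in>M. lt d u \<and> lt t d")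
  case True
  then obtain d where "d \<in> M" "lt d u" "lt t d"
    by blast
  then have "lt t s" if "s \<in> between_set X lt M u - M" for s
    using that t MX transp_onD[OF trans, of t d s] unfolding between_set_def by blast
  then show ?thesis
    using t(2) unfolding between_set_def comparable_def by blast
next
  case False
  then have "t \<in> between_set X lt M u"
    using t below unfolding between_set_def comparable_def by blast
  then show ?thesis
    using t(1) by blast
qed

lemma between_set_incomparable:
  assumes trans: "transp_on X lt" and MX: "M \<subseteq> X"
    and t: "t \<in> X" "\<forall>m\<in>M. \<not> comparable lt t m"
    and z: "z \<in> M" "lt z u" and b: "b \<in> M" "lt u b"
  shows "\<forall>s\<in>between_set X lt M u. \<not> comparable lt t s"
proof
  fix s assume s: "s \<in> between_set X lt M u"
  show "\<not> comparable lt t s"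
  proof (cases "s \<in> M")
    case False
    then have "s \<in> X" "lt z s" "lt s b"
      using s z b unfolding between_set_def by auto
    then show ?thesis
      using t z(1) b(1) MX transp_onD[OF trans, of t s b] transp_onD[OF trans, of z s t]
      unfolding comparable_def by blast
  qed (use t in blast)
qed

lemma module_between_set:
  assumes trans: "transp_on X lt" and module: "module X lt M"
    and u: "u \<in> X - M" "\<forall>m\<in>M. comparable lt u m"
    and z: "z \<in> M" "lt z u" and b: "b \<in> M" "lt u b"
  shows "module X lt (between_set X lt M u)"
proof -
  have MX: "M \<subseteq> X"
    using module unfolding module_def by blast
  have SX: "between_set X lt M u \<subseteq> X"
    using MX unfolding between_set_def by blast
  have "(\<forall>s\<in>between_set X lt M u. comparable lt t s) \<or>
      (\<forall>s\<in>between_set X lt M u. \<not> comparable lt t s)" if t: "t \<in> X - between_set X lt M u" for t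
  proof (cases "\<exists>c\<in>M. lt u c \<and> (c = t \<or> lt c t)")
    case True
    then obtain c where c: "c \<in> M" "lt u c" "c = t \<or> lt c t"
      by blast
    have "lt s t" if "s \<in> between_set X lt M u" for s
    proof -
      have "lt s c"
        using between_set_below[OF trans MX _ that c(1,2)] u(1) by blast
      then show ?thesis
        using c t that SX MX transp_onD[OF trans, of s c t] by blast
    qed
    then show ?thesis
      unfolding comparable_def by blast
  next
    case False
    then have "t \<notin> M"
      using t u(2) unfolding between_set_def comparable_def by blast
    then consider "\<forall>m\<in>M. comparable lt t m" | "\<forall>m\<in>M. \<not> comparable lt t m"
      using module t unfolding module_def by blast
    then show ?thesis
    proof cases
      case 1
      then have "\<forall>c\<in>M. lt u c \<longrightarrow> lt t c"
        using False unfolding comparable_def by blast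
      then show ?thesis
        using between_set_comparable[OF trans MX] t \<open>t \<notin> M\<close> 1 by blast
    next
      case 2
      then show ?thesis
        using between_set_incomparable[OF trans MX _ _ z b] t by blast
    qed
  qed
  then show ?thesis
    unfolding module_def using SX by blast
qed

text \<open>Otherwise \<open>u\<close> lies below some element of \<open>M\<close>, and then \<open>between_set X lt M u\<close> is a module
  that overlaps \<open>M\<close> without being comparable to it under inclusion.\<close>
lemma strong_module_comparable_above:
  assumes trans: "transp_on X lt" and strong: "strong_module X lt M"
    and z: "z \<in> M" and u: "u \<in> X - M" "\<forall>m\<in>M. comparable lt u m" "lt z u"
  shows "\<forall>m\<in>M. lt m u"
proof (rule ccontr)
  assume "\<not> (\<forall>m\<in>M. lt m u)"
  then obtain b where b: "b \<in> M" "lt u b" "\<not> lt b u"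
    using u(2) unfolding comparable_def by blast
  have "module X lt M"
    using strong unfolding strong_module_def by blast
  then have "module X lt (between_set X lt M u)"
    using module_between_set[OF trans _ u(1,2) z u(3) b(1,2)] by blast
  then have "M \<inter> between_set X lt M u = {} \<or> M \<subseteq> between_set X lt M u \<or> between_set X lt M u \<subseteq> M"
    using strong unfolding strong_module_def by blast
  moreover have "z \<in> M \<inter> between_set X lt M u" "b \<in> M - between_set X lt M u"
    "u \<in> between_set X lt M u - M"
    using z u b unfolding between_set_def by auto
  ultimately show False
    by blast
qed

lemma cpt_rep_trivial_path_minimal:
  assumes "cpt_rep X lt V E W" "z \<in> X" "W z = {v}" "x \<in> X"
  shows "\<not> lt x z"
  using assms is_path_nonempty unfolding cpt_rep_def by (metis psubset_eq subset_singletonD)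

lemma cpt_rep_trivial_path_below:
  assumes "cpt_rep X lt V E W" "z \<in> X" "W z = {v}" "y \<in> X" "{v, w} \<subseteq> W y" "w \<noteq> v"
  shows "lt z y"
  using assms unfolding cpt_rep_def by auto

lemma clique_module_obtains_above:
  assumes "clique_module X lt M" "z \<in> M" "\<forall>x\<in>M. \<not> lt x z"
  obtains b where "b \<in> M" "lt z b"
proof -
  obtain A B where "A \<noteq> {}" "B \<noteq> {}" "A \<union> B = M" "A \<inter> B = {}"
    and "\<forall>a\<in>A. \<forall>b\<in>B. comparable lt a b"
    using assms(1) unfolding clique_module_def by blast
  then have "\<exists>b\<in>M. comparable lt z b"
    using assms(2) unfolding comparable_def by blast
  then show ?thesis
    using that assms(3) unfolding comparable_def by blast
qed

section \<open>Redrawing a module on a subdivided edge\<close>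

definition docking_edge ::
  "'a set \<Rightarrow> ('a \<Rightarrow> 'a \<Rightarrow> bool) \<Rightarrow> 'a set \<Rightarrow> ('a \<Rightarrow> 'v set) \<Rightarrow> 'v set \<Rightarrow> bool"
  where "docking_edge X lt M W e \<longleftrightarrow>
    (\<forall>y\<in>X - M. ((\<forall>m\<in>M. comparable lt y m) \<longrightarrow> (\<forall>m\<in>M. lt m y) \<and> e \<subseteq> W y) \<and>
               ((\<forall>m\<in>M. \<not> comparable lt y m) \<longrightarrow> \<not> e \<subseteq> W y))"

lemma cpt_rep_trivial_path_docking_edge:
  assumes rep: "cpt_rep X lt V E W" and trans: "transp_on X lt"
    and clique: "clique_module X lt M" and z: "z \<in> M" "W z = {v}"
  obtains w where "{v, w} \<in> E" and "docking_edge X lt M W {v, w}"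
proof -
  have strong: "strong_module X lt M"
    using clique unfolding clique_module_def by blast
  then have MX: "M \<subseteq> X"
    unfolding strong_module_def module_def by blast
  have order: "\<And>x y. x \<in> X \<Longrightarrow> y \<in> X \<Longrightarrow> lt x y \<longleftrightarrow> W x \<subset> W y"
    and paths: "\<And>x. x \<in> X \<Longrightarrow> is_path V E (W x)"
    using rep unfolding cpt_rep_def by auto
  have zX: "z \<in> X"
    using z(1) MX by blast
  have minimal: "\<not> lt x z" if "x \<in> X" for x
    using cpt_rep_trivial_path_minimal[OF rep zX z(2) that] .
  obtain b where b: "b \<in> M" "lt z b"
    using clique_module_obtains_above[OF clique z(1)] minimal MX by blast
  then have "W z \<subset> W b"
    using order[of z b] z(1) MX by blast
  then have "{v} \<subset> W b"
    using z(2) by simp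
  then obtain w where w: "w \<in> W b" "w \<noteq> v" "{v, w} \<in> E"
    using is_path_neighbour[OF paths, of b v] b(1) MX by blast
  have above: "(\<forall>m\<in>M. lt m y) \<and> {v, w} \<subseteq> W y"
    if y: "y \<in> X - M" "\<forall>m\<in>M. comparable lt y m" for y
  proof -
    have "lt z y"
      using y z(1) minimal[of y] unfolding comparable_def by blast
    then have "\<forall>m\<in>M. lt m y"
      using strong_module_comparable_above[OF trans strong z(1)] y by blast
    moreover from this have "W b \<subset> W y"
      using order b(1) y(1) MX by blast
    ultimately show ?thesis
      using w(1) \<open>{v} \<subset> W b\<close> by blast
  qed
  have apart: "\<not> {v, w} \<subseteq> W y" if y: "y \<in> X - M" "\<forall>m\<in>M. \<not> comparable lt y m" for y
    using cpt_rep_trivial_path_below[OF rep zX z(2), of y w] w(2) y z(1)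
    unfolding comparable_def by blast
  show ?thesis
    using that[OF w(3)] above apart unfolding docking_edge_def by blast
qed

lemma if_Un_psubset_iff:
  assumes "S \<subseteq> V" "T \<subseteq> V" "Q \<inter> V = {}"
  shows "(if A \<subseteq> S then S \<union> Q else S) \<subset> (if A \<subseteq> T then T \<union> Q else T) \<longleftrightarrow> S \<subset> T"
  using assms by (auto split: if_splits)

locale module_redrawing = edge_subdivision V E v w qs
  for V :: "'v set" and E v w qs +
  fixes X :: "'a set" and lt :: "'a \<Rightarrow> 'a \<Rightarrow> bool" and W :: "'a \<Rightarrow> 'v set"
    and M :: "'a set" and U :: "'a \<Rightarrow> 'v set"
  assumes rep: "cpt_rep X lt V E W" and module: "module X lt M"
    and docking: "docking_edge X lt M W {v, w}"
    and U_paths: "\<And>x. x \<in> M \<Longrightarrow> is_path (V \<union> set qs) (subdivide_edge E v w qs) (U x)"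
    and U_subset: "\<And>x. x \<in> M \<Longrightarrow> U x \<subseteq> set qs"
    and U_order: "\<And>x y. x \<in> M \<Longrightarrow> y \<in> M \<Longrightarrow> lt x y \<longleftrightarrow> U x \<subset> U y"
begin

definition redrawn :: "'a \<Rightarrow> 'v set" where
  "redrawn x = (if x \<in> M then U x else if {v, w} \<subseteq> W x then W x \<union> set qs else W x)"

lemma W_path: "x \<in> X \<Longrightarrow> is_path V E (W x)"
  and W_order: "x \<in> X \<Longrightarrow> y \<in> X \<Longrightarrow> lt x y \<longleftrightarrow> W x \<subset> W y"
  using rep unfolding cpt_rep_def by auto

lemma W_subset: "x \<in> X \<Longrightarrow> W x \<subseteq> V" and W_nonempty: "x \<in> X \<Longrightarrow> W x \<noteq> {}"
  using is_path_subset is_path_nonempty W_path by blast+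

lemma outside_cases:
  assumes "y \<in> X - M"
  shows "(\<forall>m\<in>M. lt m y) \<and> {v, w} \<subseteq> W y \<or> (\<forall>m\<in>M. \<not> comparable lt y m) \<and> \<not> {v, w} \<subseteq> W y"
  using assms module docking unfolding module_def docking_edge_def by blast

lemma is_path_redrawn: "x \<in> X \<Longrightarrow> is_path (V \<union> set qs) (subdivide_edge E v w qs) (redrawn x)"
  unfolding redrawn_def
  using U_paths W_path is_path_subdivide_edge_through is_path_subdivide_edge_avoiding by auto

lemma lt_iff_redrawn_psubset_mixed:
  assumes x: "x \<in> M" and y: "y \<in> X - M"
  shows "lt x y \<longleftrightarrow> redrawn x \<subset> redrawn y" and "lt y x \<longleftrightarrow> redrawn y \<subset> redrawn x"
proof -
  have "x \<in> X"
    using x module unfolding module_def by blast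
  have Ux: "U x \<subseteq> set qs" "U x \<noteq> {}"
    using U_subset[OF x] is_path_nonempty[OF U_paths[OF x]] by auto
  have Wy: "W y \<subseteq> V" "W y \<noteq> {}"
    using W_subset W_nonempty y by auto
  consider "\<forall>m\<in>M. lt m y" "{v, w} \<subseteq> W y" | "\<forall>m\<in>M. \<not> comparable lt y m" "\<not> {v, w} \<subseteq> W y"
    using outside_cases[OF y] by blast
  then have "(lt x y \<longleftrightarrow> redrawn x \<subset> redrawn y) \<and> (lt y x \<longleftrightarrow> redrawn y \<subset> redrawn x)"
  proof cases
    case 1
    then have "lt x y" "\<not> lt y x"
      using x y W_order[OF \<open>x \<in> X\<close>, of y] W_order[of y x] \<open>x \<in> X\<close> by auto
    moreover have "redrawn y = W y \<union> set qs" "v \<in> W y - set qs"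
      using 1 y qs_fresh endpoints unfolding redrawn_def by auto
    ultimately show ?thesis
      using x Ux unfolding redrawn_def by auto
  next
    case 2
    then have "\<not> lt x y" "\<not> lt y x"
      using x unfolding comparable_def by auto
    moreover have "redrawn y = W y" "W y \<inter> set qs = {}"
      using 2 y Wy qs_fresh unfolding redrawn_def by auto
    ultimately show ?thesis
      using x Ux Wy unfolding redrawn_def by auto
  qed
  then show "lt x y \<longleftrightarrow> redrawn x \<subset> redrawn y" "lt y x \<longleftrightarrow> redrawn y \<subset> redrawn x"
    by blast+
qed

lemma lt_iff_redrawn_psubset_outside:
  assumes "x \<in> X - M" "y \<in> X - M"
  shows "lt x y \<longleftrightarrow> redrawn x \<subset> redrawn y"
proof -
  have "W x \<subseteq> V" "W y \<subseteq> V"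
    using assms W_subset by auto
  have "lt x y \<longleftrightarrow> W x \<subset> W y"
    using W_order assms by blast
  also have "\<dots> \<longleftrightarrow> (if {v, w} \<subseteq> W x then W x \<union> set qs else W x)
      \<subset> (if {v, w} \<subseteq> W y then W y \<union> set qs else W y)"
    by (rule if_Un_psubset_iff[OF \<open>W x \<subseteq> V\<close> \<open>W y \<subseteq> V\<close> qs_fresh, symmetric])
  also have "\<dots> \<longleftrightarrow> redrawn x \<subset> redrawn y"
    using assms unfolding redrawn_def by (simp only: Diff_iff if_False)
  finally show ?thesis .
qed

lemma lt_iff_redrawn_psubset:
  assumes "x \<in> X" "y \<in> X"
  shows "lt x y \<longleftrightarrow> redrawn x \<subset> redrawn y"
  using assms U_order lt_iff_redrawn_psubset_mixed lt_iff_redrawn_psubset_outside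
  unfolding redrawn_def by (cases "x \<in> M"; cases "y \<in> M") auto

lemma cpt_rep_redrawn: "cpt_rep X lt (V \<union> set qs) (subdivide_edge E v w qs) redrawn"
  unfolding cpt_rep_def using tree_subdivide_edge is_path_redrawn lt_iff_redrawn_psubset by blast

end

lemma upt_append_upt: "i \<le> j \<Longrightarrow> j \<le> m \<Longrightarrow> [i..<j] @ [j..<m] = [i..<m]"
  by (metis le_add_diff_inverse upt_add_eq_append)

lemma is_path_subdivide_edge_upt:
  assumes "edge_subdivision V E v w [k..<k + n]" "l \<le> r" "r < n"
  shows "is_path (V \<union> {k..<k + n}) (subdivide_edge E v w [k..<k + n]) {k + l..k + r}"
proof -
  have "[k + l..<Suc (k + r)] @ [Suc (k + r)..<k + n] = [k + l..<k + n]"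
    by (rule upt_append_upt) (use assms in auto)
  moreover have "[k..<k + l] @ [k + l..<k + n] = [k..<k + n]"
    by (rule upt_append_upt) (use assms in auto)
  ultimately have "[k..<k + n] = [k..<k + l] @ [k + l..<Suc (k + r)] @ [Suc (k + r)..<k + n]"
    by (simp only:)
  then have "is_path (V \<union> set [k..<k + n]) (subdivide_edge E v w [k..<k + n])
      (set [k + l..<Suc (k + r)])"
    by (rule edge_subdivision.is_path_subdivide_edge_inner[OF assms(1)]) (use assms in simp)
  moreover have "set [k + l..<Suc (k + r)] = {k + l..k + r}"
    by (simp only: set_upt atLeastLessThanSuc_atLeastAtMost)
  ultimately show ?thesis
    by simp
qed

lemma atLeastAtMost_shift_psubset_iff:
  fixes k a b c d :: nat
  shows "{k + a..k + b} \<subset> {k + c..k + d} \<longleftrightarrow> {a..b} \<subset> {c..d}"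
  by (auto simp: less_le_not_le)

lemma cpt_rep_redraw_CI_module:
  fixes k :: nat
  assumes rep: "cpt_rep X lt {..<k} E W" and module: "module X lt M" "M \<noteq> {}"
    and CI: "CI M lt" and edge: "{v, w} \<in> E" and docking: "docking_edge X lt M W {v, w}"
  obtains V' :: "nat set" and E' W' where "cpt_rep X lt V' E' W'"
    and "\<And>x. x \<in> M \<Longrightarrow> \<not> trivial_path (W' x)"
proof -
  obtain l r :: "'a \<Rightarrow> nat" and n
    where lr: "\<And>x. x \<in> M \<Longrightarrow> l x < r x \<and> r x < n"
      and order: "\<And>x y. x \<in> M \<Longrightarrow> y \<in> M \<Longrightarrow> lt x y \<longleftrightarrow> {l x..r x} \<subset> {l y..r y}"
    using CI_nondegenerate_interval_rep[OF CI] by blast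
  obtain x0 where "x0 \<in> M"
    using module(2) by blast
  then have "0 < n"
    using lr by fastforce
  then have subdivision: "edge_subdivision {..<k} E v w [k..<k + n]"
    using rep edge by unfold_locales (auto simp: cpt_rep_def)
  interpret module_redrawing "{..<k}" E v w "[k..<k + n]" X lt W M "\<lambda>x. {k + l x..k + r x}"
  proof (intro module_redrawing.intro subdivision module_redrawing_axioms.intro)
    show "is_path ({..<k} \<union> set [k..<k + n]) (subdivide_edge E v w [k..<k + n]) {k + l x..k + r x}"
      if "x \<in> M" for x
      using is_path_subdivide_edge_upt[OF subdivision] lr[OF that] by simp
    show "lt x y \<longleftrightarrow> {k + l x..k + r x} \<subset> {k + l y..k + r y}" if "x \<in> M" "y \<in> M" for x y
      using order[OF that] by (simp only: atLeastAtMost_shift_psubset_iff)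
    show "{k + l x..k + r x} \<subseteq> set [k..<k + n]" if "x \<in> M" for x
      using lr[OF that] by auto
  qed (rule rep module docking)+
  have "\<not> trivial_path (redrawn x)" if "x \<in> M" for x
    using lr[OF that] that unfolding trivial_path_def redrawn_def
    by (metis atLeastAtMost_singleton_iff add_left_cancel less_irrefl_nat)
  then show ?thesis
    using that cpt_rep_redrawn by blast
qed

lemma cpt_rep_relabel_lessThan:
  assumes "cpt_rep X lt V E W"
  obtains h :: "'v \<Rightarrow> nat" and k :: nat where "cpt_rep X lt {..<k} ((`) h ` E) (\<lambda>x. h ` W x)"
proof -
  have "finite V"
    using assms unfolding cpt_rep_def tree_def by blast
  then obtain h :: "'v \<Rightarrow> nat" and k :: nat where "h ` V = {..<k}" "inj_on h V"
    using finite_imp_inj_to_nat_seg unfolding lessThan_def by metis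
  then have "cpt_rep X lt {..<k} ((`) h ` E) (\<lambda>x. h ` W x)"
    using cpt_rep_image[OF assms, of h] by simp
  then show ?thesis
    by (rule that)
qed

theorem mainTheorem5:
  fixes X :: "'a set" and lt :: "'a \<Rightarrow> 'a \<Rightarrow> bool" and M :: "'a set"
    and V :: "'v set" and E :: "'v set set" and W :: "'a \<Rightarrow> 'v set" and z :: 'a
  assumes "finite_poset X lt"
    and "dually_CPT X lt"
    and "clique_module X lt M"
    and "CI M lt"
    and "cpt_rep X lt V E W"
    and "z \<in> M"
    and "trivial_path (W z)"
  shows "\<exists>(V'::nat set) E' W'. cpt_rep X lt V' E' W' \<and> \<not> trivial_path (W' z)"
proof -
  obtain h :: "'v \<Rightarrow> nat" and k :: nat where rep: "cpt_rep X lt {..<k} ((`) h ` E) (\<lambda>x. h ` W x)"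
    using cpt_rep_relabel_lessThan[OF assms(5)] by blast
  obtain v where "W z = {v}"
    using assms(7) unfolding trivial_path_def by blast
  then have "h ` W z = {h v}"
    by simp
  then obtain w where edge: "{h v, w} \<in> (`) h ` E"
    and docking: "docking_edge X lt M (\<lambda>x. h ` W x) {h v, w}"
    using cpt_rep_trivial_path_docking_edge[OF rep finite_poset_transp_on[OF assms(1)] assms(3,6)]
    by blast
  have "module X lt M" "M \<noteq> {}"
    using assms(3,6) unfolding clique_module_def strong_module_def by blast+
  then obtain V' :: "nat set" and E' W' where "cpt_rep X lt V' E' W'"
    and "\<And>x. x \<in> M \<Longrightarrow> \<not> trivial_path (W' x)"
    using cpt_rep_redraw_CI_module[OF rep _ _ assms(4) edge docking] by blast
  then show ?thesis
    using assms(6) by blast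
qed

end
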